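(* Let $\rho>1$, let $f$ be analytic inside and on the Bernstein ellipse $\mathcal{E}_\rho$, and let $M=\max_{z\in\mathcal{E}_\rho}|f(z)|$. Then the Legendre coefficients $a_n^L=(n+\tfrac12)\int_{-1}^1f(x)P_n(x)\,dx$ satisfy, for all $n\ge1$, \[ |a_n^L|\le\frac{\Lambda(n,\rho,\tfrac12)}{\sqrt{\rho^2-1}}\frac{\sqrt n}{\rho^n}, \] where \[ \Lambda(n,\rho,\tfrac12)=\frac{\Gamma(\tfrac12)M\Upsilon_n^{1,1/2}}{\pi}\left[2\left(\rho+\frac1\rho\right)+2\left(\frac\pi2-1\right)\left(\rho-\frac1\rho\right)\right], \] and $\Upsilon_n^{a,b}=\exp\!\left(\frac{a-b}{2(n+b-1)}+\frac{1}{12(n+a-1)}+\frac{(a-1)(a-b)}{n}\right)$.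
   Context: $P_n$ is the Legendre polynomial of degree $n$ (normalized by $P_n(1)=1$). $\mathcal{E}_\rho=\{\tfrac12(\rho e^{i\theta}+\rho^{-1}e^{-i\theta}):0\le\theta\le2\pi\}$ is the Bernstein ellipse. *)

theory Defs
  imports "HOL-Analysis.Analysis"
begin

fun legendreP :: "nat \<Rightarrow> real \<Rightarrow> real" where
  "legendreP 0 x = 1"
| "legendreP (Suc 0) x = x"
| "legendreP (Suc (Suc n)) x =
     ((2 * real n + 3) * x * legendreP (Suc n) x - (real n + 1) * legendreP n x) / (real n + 2)"

definition bernstein_ellipse :: "real \<Rightarrow> complex set" where
  "bernstein_ellipse \<rho> =
     (\<lambda>\<theta>. (of_real \<rho> * exp (\<i> * of_real \<theta>) + of_real (1/\<rho>) * exp (- \<i> * of_real \<theta>)) / 2)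
       ` {0..2*pi}"

text \<open>Closed region bounded by E_rho (inside and on E_rho): union of E_r, 1 <= r <= rho
  (E_1 is the segment [-1,1]).\<close>
definition bernstein_region :: "real \<Rightarrow> complex set" where
  "bernstein_region \<rho> = (\<Union>r\<in>{1..\<rho>}. bernstein_ellipse r)"

definition legendre_coeff :: "(complex \<Rightarrow> complex) \<Rightarrow> nat \<Rightarrow> complex" where
  "legendre_coeff f n =
     of_real (real n + 1/2) * integral {-1..1} (\<lambda>x::real. f (of_real x) * of_real (legendreP n x))"

definition Upsilon :: "nat \<Rightarrow> real \<Rightarrow> real \<Rightarrow> real" where
  "Upsilon n a b = exp ((a - b) / (2 * (real n + b - 1)) + 1 / (12 * (real n + a - 1))
                        + (a - 1) * (a - b) / real n)"

definition Lambda_half :: "nat \<Rightarrow> real \<Rightarrow> real \<Rightarrow> real" where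
  "Lambda_half n \<rho> M = Gamma (1/2) * M * Upsilon n 1 (1/2) / pi *
     (2 * (\<rho> + 1/\<rho>) + 2 * (pi/2 - 1) * (\<rho> - 1/\<rho>))"

end

theory Submission
  imports Defs "HOL-Complex_Analysis.Complex_Analysis"
begin

text \<open>
  Parametrise \<open>E\<^sub>\<rho>\<close> as \<open>\<gamma>(\<tau>) = J(t)\<close> with the Joukowski map \<open>J(t) = (t + 1/t)/2\<close> and \<open>|t| = 1/\<rho>\<close>.
  Cauchy's formula on \<open>\<gamma>\<close> and Fubini turn \<open>2\<pi>i \<integral>\<^sub>-\<^sub>1\<^sup>1 f P\<^sub>n\<close> into \<open>\<integral>\<^sub>0\<^sup>1 K\<^sub>n(\<gamma>) f(\<gamma>) \<gamma>'\<close> with the kernel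
  \<open>K\<^sub>n(z) = \<integral>\<^sub>0\<^sup>\<pi> P\<^sub>n(cos \<phi>) sin \<phi> / (z - cos \<phi>) d\<phi>\<close>. Since \<open>sin \<phi> / (J(t) - cos \<phi>) = 2 \<Sum>\<^sub>k t\<^sup>k sin k\<phi>\<close>,
  \<open>K\<^sub>n(J(t))\<close> is \<open>2 \<Sum>\<^sub>k t\<^sup>k c\<^sub>n\<^sub>k\<close> with the sine moments \<open>c\<^sub>n\<^sub>k = \<integral>\<^sub>0\<^sup>\<pi> P\<^sub>n(cos \<phi>) sin k\<phi> d\<phi>\<close>, which the
  three-term recurrence computes explicitly: they vanish unless \<open>k = n + 1 + 2j\<close>, where they are
  the coefficients of \<open>(1 - z)\<^sup>-\<^sup>1\<^sup>/\<^sup>2\<close> times Wallis numbers \<open>w\<^sub>n\<^sub>+\<^sub>j \<le> w\<^sub>n\<close>. Hence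
  \<open>|K\<^sub>n(J(t))| \<le> 2 w\<^sub>n |t|\<^sup>n\<^sup>+\<^sup>1 (1 - |t|\<^sup>2)\<^sup>-\<^sup>1\<^sup>/\<^sup>2\<close>, and log-convexity of \<open>\<Gamma>\<close> bounds \<open>(n + 1/2) w\<^sub>n\<close> by
  \<open>\<Gamma>(1/2) \<surd>n \<Upsilon>\<close>. The remaining factor comes from \<open>|\<gamma>'| \<le> 2\<pi> (a |sin| + b (1 - |sin|))\<close>, whose
  integral is \<open>4a + (2\<pi> - 4) b\<close> for the semi-axes \<open>a, b\<close> of \<open>E\<^sub>\<rho>\<close>.
\<close>

section \<open>Sine moments of Legendre polynomials\<close>

definition inv_sqrt_coeff :: "nat \<Rightarrow> real" where
  "inv_sqrt_coeff j = (-1)^j * ((-1/2) gchoose j)"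

(* wallis m is the Wallis integral of sin^(2m+1) over [0, pi], that is 2 (2m)!! / (2m+1)!! *)
fun wallis :: "nat \<Rightarrow> real" where
  "wallis 0 = 2"
| "wallis (Suc m) = wallis m * (2 * real m + 2) / (2 * real m + 3)"

lemma inv_sqrt_coeff_0 [simp]: "inv_sqrt_coeff 0 = 1"
  by (simp add: inv_sqrt_coeff_def)

lemma inv_sqrt_coeff_Suc:
  "inv_sqrt_coeff (Suc j) = inv_sqrt_coeff j * (2 * real j + 1) / (2 * real j + 2)"
proof -
  have "real (Suc j) * ((-1/2::real) gchoose Suc j) = (-1/2 - real j) * ((-1/2) gchoose j)"
    using gbinomial_mult_1[of "-1/2::real" j] by (simp add: algebra_simps)
  then have "((-1/2::real) gchoose Suc j) = - ((2 * real j + 1) / (2 * real j + 2)) * ((-1/2) gchoose j)"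
    by (simp add: field_simps)
  then show ?thesis by (simp add: inv_sqrt_coeff_def)
qed

lemma inv_sqrt_coeff_pos: "inv_sqrt_coeff j > 0"
  by (induction j) (simp_all add: inv_sqrt_coeff_Suc)

lemma sums_inv_sqrt_coeff:
  assumes "\<bar>z\<bar> < 1"
  shows "(\<lambda>j. inv_sqrt_coeff j * z^j) sums (1 - z) powr (-1/2)"
proof -
  have "(\<lambda>j. ((-1/2::real) gchoose j) * (-z)^j) sums (1 + -z) powr (-1/2)"
    by (rule gen_binomial_real) (use assms in simp)
  moreover have "((-1/2::real) gchoose j) * (-z)^j = inv_sqrt_coeff j * z^j" for j
    unfolding inv_sqrt_coeff_def power_minus[of z j] by (simp only: mult_ac)
  ultimately show ?thesis by simp
qed

lemma sum_inv_sqrt_coeff_le: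
  assumes "0 \<le> z" "z < 1"
  shows "(\<Sum>j<N. inv_sqrt_coeff j * z^j) \<le> (1 - z) powr (-1/2)"
proof -
  have sums: "(\<lambda>j. inv_sqrt_coeff j * z^j) sums (1 - z) powr (-1/2)"
    by (rule sums_inv_sqrt_coeff) (use assms in simp)
  have "(\<Sum>j<N. inv_sqrt_coeff j * z^j) \<le> (\<Sum>j. inv_sqrt_coeff j * z^j)"
    by (rule sum_le_suminf[OF sums_summable[OF sums]])
       (use assms in \<open>auto intro!: mult_nonneg_nonneg less_imp_le[OF inv_sqrt_coeff_pos]\<close>)
  then show ?thesis using sums_unique[OF sums] by simp
qed

lemma wallis_pos: "wallis m > 0"
  by (induction m) simp_all

lemma wallis_antimono: "m \<le> m' \<Longrightarrow> wallis m' \<le> wallis m"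
proof (induction m' rule: dec_induct)
  case (step m')
  have "wallis (Suc m') = wallis m' * ((2 * real m' + 2) / (2 * real m' + 3))"
    by simp
  also have "\<dots> \<le> wallis m' * 1"
    using wallis_pos[of m'] by (intro mult_left_mono) auto
  finally show ?case using step.IH by simp
qed simp

lemma inv_sqrt_coeff_mult_wallis: "inv_sqrt_coeff j * wallis j = 2 / (2 * real j + 1)"
proof (induction j)
  case (Suc j)
  define x where "x = 2 * real j + 1"
  have nz: "x \<noteq> 0" "x + 1 \<noteq> 0" "x + 2 \<noteq> 0"
    unfolding x_def by linarith+
  have "inv_sqrt_coeff (Suc j) * wallis (Suc j) = inv_sqrt_coeff j * wallis j * (x / (x + 1) * ((x + 1) / (x + 2)))"
    unfolding x_def by (simp add: inv_sqrt_coeff_Suc algebra_simps)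
  also have "\<dots> = 2 / (x + 2)"
    unfolding Suc x_def[symmetric] using nz by (simp add: divide_simps)
  finally show ?case unfolding x_def by (simp add: algebra_simps)
qed simp

definition legendre_sine_moment :: "nat \<Rightarrow> nat \<Rightarrow> real" where
  "legendre_sine_moment n k =
     (if n < k \<and> odd (k - n) then inv_sqrt_coeff ((k - n - 1) div 2) * wallis ((k + n - 1) div 2) else 0)"

lemma legendre_sine_moment_eq:
  "legendre_sine_moment n (n + 1 + 2 * j) = inv_sqrt_coeff j * wallis (n + j)"
  by (simp add: legendre_sine_moment_def)

lemma legendre_sine_moment_eq_0:
  assumes "\<And>j. k \<noteq> n + 1 + 2 * j"
  shows "legendre_sine_moment n k = 0"
proof -
  have "\<not> (n < k \<and> odd (k - n))"
  proof
    assume "n < k \<and> odd (k - n)"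
    then have "k = n + 1 + 2 * ((k - n - 1) div 2)" by presburger
    with assms show False by blast
  qed
  then show ?thesis unfolding legendre_sine_moment_def by (rule if_not_P)
qed

lemma legendre_sine_moment_nonneg: "legendre_sine_moment n k \<ge> 0"
  unfolding legendre_sine_moment_def
  using inv_sqrt_coeff_pos wallis_pos by (auto intro!: mult_nonneg_nonneg less_imp_le)

lemma legendre_sine_moment_0: "legendre_sine_moment 0 k = (if odd k then 2 / real k else 0)"
proof (cases "odd k")
  case True
  then obtain j where "k = 2 * j + 1" using oddE by blast
  then show ?thesis using inv_sqrt_coeff_mult_wallis[of j] by (simp add: legendre_sine_moment_def)
next
  case False
  then show ?thesis by (simp add: legendre_sine_moment_def)
qed

lemma legendre_sine_moment_1:
  assumes "k \<ge> 1"
  shows "legendre_sine_moment 1 k = (legendre_sine_moment 0 (k + 1) + legendre_sine_moment 0 (k - 1)) / 2"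
proof (cases "even k")
  case True
  define j where "j = k div 2 - 1"
  define x where "x = 2 * real j + 1"
  have k: "k = 1 + 1 + 2 * j" using True assms unfolding j_def by presburger
  have nz: "x \<noteq> 0" "x + 2 \<noteq> 0" unfolding x_def by linarith+
  have "legendre_sine_moment 1 k = inv_sqrt_coeff j * wallis j * ((x + 1) / (x + 2))"
    unfolding k legendre_sine_moment_eq x_def by (simp add: algebra_simps)
  also have "\<dots> = (2 / (x + 2) + 2 / x) / 2"
    unfolding inv_sqrt_coeff_mult_wallis x_def[symmetric] using nz by (simp add: divide_simps)
  also have "\<dots> = (legendre_sine_moment 0 (k + 1) + legendre_sine_moment 0 (k - 1)) / 2"
  proof -
    have "real (k + 1) = x + 2" "real (k - 1) = x" "odd (k + 1)" "odd (k - 1)"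
      using k unfolding x_def by auto
    then show ?thesis by (simp add: legendre_sine_moment_0)
  qed
  finally show ?thesis .
next
  case False
  then have "legendre_sine_moment 1 k = 0"
    by (intro legendre_sine_moment_eq_0) presburger
  with False show ?thesis by (simp add: legendre_sine_moment_0)
qed

lemma legendre_recurrence_identity:
  fixes x y :: real
  assumes "x \<ge> 0" "y \<ge> 0"
  shows "(2 * y + 3) / 2 * ((2 * x + 1) / (2 * x + 2) * ((2 * x + 2 * y + 4) / (2 * x + 2 * y + 5)) + 1)
           - (y + 1) * ((2 * x + 1) / (2 * x + 2))
         = (y + 2) * ((2 * x + 2 * y + 4) / (2 * x + 2 * y + 5))"
  using assms by (simp add: divide_simps) (simp add: algebra_simps)

lemma legendre_sine_moment_Suc_Suc_support:
  "legendre_sine_moment (Suc (Suc n)) (n + 3 + 2 * j) =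
     ((2 * real n + 3) / 2 * (legendre_sine_moment (Suc n) (n + 4 + 2 * j) + legendre_sine_moment (Suc n) (n + 2 + 2 * j))
       - (real n + 1) * legendre_sine_moment n (n + 3 + 2 * j)) / (real n + 2)"
proof -
  define A where "A = inv_sqrt_coeff j"
  define B where "B = wallis (n + j + 1)"
  define r where "r = (2 * real j + 1) / (2 * real j + 2)"
  define s where "s = (2 * real j + 2 * real n + 4) / (2 * real j + 2 * real n + 5)"
  have A_Suc: "inv_sqrt_coeff (Suc j) = A * r"
    unfolding A_def r_def by (simp add: inv_sqrt_coeff_Suc)
  have B_Suc: "wallis (n + j + 2) = B * s"
    unfolding B_def s_def by (simp add: algebra_simps)
  have moments:
    "legendre_sine_moment (Suc (Suc n)) (n + 3 + 2 * j) = A * (B * s)"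
    "legendre_sine_moment (Suc n) (n + 4 + 2 * j) = A * r * (B * s)"
    "legendre_sine_moment (Suc n) (n + 2 + 2 * j) = A * B"
    "legendre_sine_moment n (n + 3 + 2 * j) = A * r * B"
  proof -
    have "Suc (Suc n) + 1 + 2 * j = n + 3 + 2 * j" "Suc (Suc n) + j = n + j + 2"
      "Suc n + 1 + 2 * Suc j = n + 4 + 2 * j" "Suc n + Suc j = n + j + 2"
      "Suc n + 1 + 2 * j = n + 2 + 2 * j" "Suc n + j = n + j + 1"
      "n + 1 + 2 * Suc j = n + 3 + 2 * j" "n + Suc j = n + j + 1"
      by simp_all
    with legendre_sine_moment_eq[of "Suc (Suc n)" j] legendre_sine_moment_eq[of "Suc n" "Suc j"]
      legendre_sine_moment_eq[of "Suc n" j] legendre_sine_moment_eq[of n "Suc j"]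
    show "legendre_sine_moment (Suc (Suc n)) (n + 3 + 2 * j) = A * (B * s)"
      "legendre_sine_moment (Suc n) (n + 4 + 2 * j) = A * r * (B * s)"
      "legendre_sine_moment (Suc n) (n + 2 + 2 * j) = A * B"
      "legendre_sine_moment n (n + 3 + 2 * j) = A * r * B"
      by (simp_all only: A_Suc B_Suc A_def[symmetric] B_def[symmetric])
  qed
  have key: "(2 * real n + 3) / 2 * (r * s + 1) - (real n + 1) * r = (real n + 2) * s"
    unfolding r_def s_def by (rule legendre_recurrence_identity) auto
  have "((2 * real n + 3) / 2 * (A * r * (B * s) + A * B) - (real n + 1) * (A * r * B)) / (real n + 2)
      = A * B * ((2 * real n + 3) / 2 * (r * s + 1) - (real n + 1) * r) / (real n + 2)"
    by (simp add: algebra_simps)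
  also have "\<dots> = A * (B * s)"
    unfolding key by (simp add: field_simps)
  finally show ?thesis
    unfolding moments by simp
qed

lemma legendre_sine_moment_Suc_Suc:
  assumes "k \<ge> 1"
  shows "legendre_sine_moment (Suc (Suc n)) k =
     ((2 * real n + 3) / 2 * (legendre_sine_moment (Suc n) (k + 1) + legendre_sine_moment (Suc n) (k - 1))
       - (real n + 1) * legendre_sine_moment n k) / (real n + 2)"
proof -
  have "(\<exists>j. k = n + 3 + 2 * j) \<or> k = n + 1 \<or> (\<forall>j. k \<noteq> n + 1 + 2 * j)"
  proof (cases "\<exists>j. k = n + 1 + 2 * j")
    case True
    then obtain j where "k = n + 1 + 2 * j" by blast
    then show ?thesis by (cases j) auto
  qed auto
  then consider j where "k = n + 3 + 2 * j" | "k = n + 1" | "\<And>j. k \<noteq> n + 1 + 2 * j"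
    by blast
  then show ?thesis
  proof cases
    case 1
    then show ?thesis
      using legendre_sine_moment_Suc_Suc_support[of n j] by (simp add: algebra_simps)
  next
    case 2
    have "(2 * real n + 3) / 2 * wallis (Suc n) = (real n + 1) * wallis n"
      by (simp add: divide_simps) (simp add: algebra_simps)
    moreover have "legendre_sine_moment (Suc (Suc n)) k = 0" "legendre_sine_moment (Suc n) (k - 1) = 0"
      using 2 by (auto intro!: legendre_sine_moment_eq_0)
    ultimately show ?thesis
      using 2 legendre_sine_moment_eq[of "Suc n" 0] legendre_sine_moment_eq[of n 0] by simp
  next
    case 3
    have "k \<noteq> Suc (Suc n) + 1 + 2 * j" "k + 1 \<noteq> Suc n + 1 + 2 * j"
      "k - 1 \<noteq> Suc n + 1 + 2 * j" "k \<noteq> n + 1 + 2 * j" for j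
      using 3[of "Suc j"] 3[of j] assms by auto
    then have "legendre_sine_moment (Suc (Suc n)) k = 0" "legendre_sine_moment (Suc n) (k + 1) = 0"
      "legendre_sine_moment (Suc n) (k - 1) = 0" "legendre_sine_moment n k = 0"
      by (intro legendre_sine_moment_eq_0; blast)+
    then show ?thesis by simp
  qed
qed

lemma continuous_on_legendreP [continuous_intros]:
  assumes "continuous_on S g"
  shows "continuous_on S (\<lambda>x. legendreP n (g x))"
proof -
  have "continuous_on UNIV (\<lambda>x. legendreP n x)"
    by (induction n rule: induct_nat_012) (auto intro!: continuous_intros)
  then show ?thesis by (rule continuous_on_compose2[OF _ assms]) simp
qed

lemma has_integral_sin_mult:
  "((\<lambda>\<phi>. sin (real k * \<phi>)) has_integral (if odd k then 2 / real k else 0)) {0..pi}"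
proof (cases "k = 0")
  case False
  have "((\<lambda>\<phi>. sin (real k * \<phi>)) has_integral (- cos (real k * pi) / real k - - cos (real k * 0) / real k)) {0..pi}"
    by (rule fundamental_theorem_of_calculus)
       (use False in \<open>auto intro!: derivative_eq_intros simp: has_real_derivative_iff_has_vector_derivative[symmetric]\<close>)
  then show ?thesis by (auto simp: field_simps)
qed simp

lemma cos_mult_sin_mult:
  assumes "k \<ge> 1"
  shows "cos \<phi> * sin (real k * \<phi>) = (sin (real (k + 1) * \<phi>) + sin (real (k - 1) * \<phi>)) / 2"
proof -
  have "real (k + 1) * \<phi> = real k * \<phi> + \<phi>" "real (k - 1) * \<phi> = real k * \<phi> - \<phi>"
    using assms by (simp_all add: of_nat_diff algebra_simps)
  then show ?thesis by (simp add: sin_add sin_diff)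
qed

lemma legendreP_cos_mult_sin_Suc_Suc:
  assumes "k \<ge> 1"
  shows "legendreP (Suc (Suc n)) (cos \<phi>) * sin (real k * \<phi>) =
    ((2 * real n + 3) / 2 * (legendreP (Suc n) (cos \<phi>) * sin (real (k + 1) * \<phi>)
        + legendreP (Suc n) (cos \<phi>) * sin (real (k - 1) * \<phi>))
      - (real n + 1) * (legendreP n (cos \<phi>) * sin (real k * \<phi>))) / (real n + 2)"
proof -
  have "legendreP (Suc (Suc n)) (cos \<phi>) * sin (real k * \<phi>)
      = ((2 * real n + 3) * legendreP (Suc n) (cos \<phi>) * (cos \<phi> * sin (real k * \<phi>))
          - (real n + 1) * (legendreP n (cos \<phi>) * sin (real k * \<phi>))) / (real n + 2)"
    by (simp add: algebra_simps)
  then show ?thesis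
    unfolding cos_mult_sin_mult[OF assms] by (simp add: field_simps)
qed

lemma has_integral_legendreP_cos_sin:
  "((\<lambda>\<phi>. legendreP n (cos \<phi>) * sin (real k * \<phi>)) has_integral legendre_sine_moment n k) {0..pi}"
proof (induction n arbitrary: k rule: induct_nat_012)
  case 0
  show ?case using has_integral_sin_mult[of k] by (simp add: legendre_sine_moment_0)
next
  case 1
  show ?case
  proof (cases "k = 0")
    case False
    then have k: "k \<ge> 1" by simp
    have "((\<lambda>\<phi>. (sin (real (k + 1) * \<phi>) + sin (real (k - 1) * \<phi>)) / 2) has_integral legendre_sine_moment 1 k) {0..pi}"
      unfolding legendre_sine_moment_1[OF k] legendre_sine_moment_0
      by (intro has_integral_divide has_integral_add has_integral_sin_mult)
    then have "((\<lambda>\<phi>. legendreP 1 (cos \<phi>) * sin (real k * \<phi>)) has_integral legendre_sine_moment 1 k) {0..pi}"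
      by (rule has_integral_eq[rotated]) (simp add: cos_mult_sin_mult[OF k])
    then show ?thesis by simp
  qed (simp add: legendre_sine_moment_def)
next
  case (ge2 n)
  show ?case
  proof (cases "k = 0")
    case False
    then have k: "k \<ge> 1" by simp
    show ?thesis
      unfolding legendreP_cos_mult_sin_Suc_Suc[OF k] legendre_sine_moment_Suc_Suc[OF k]
      by (intro has_integral_divide has_integral_diff has_integral_mult_right has_integral_add ge2.IH)
  qed (simp add: legendre_sine_moment_def)
qed

lemma sum_legendre_sine_moment_le:
  assumes "0 \<le> s" "s < 1"
  shows "(\<Sum>k<N. s^k * legendre_sine_moment n k) \<le> wallis n * s^(n + 1) * (1 - s^2) powr (-1/2)"
proof -
  define F where "F k = s^k * legendre_sine_moment n k" for k
  define I where "I = (\<lambda>j. n + 1 + 2 * j) ` {..<N}"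
  have F_nonneg: "F k \<ge> 0" for k
    unfolding F_def using assms legendre_sine_moment_nonneg by simp
  have F_eq_0: "F k = 0" if "k < N" "k \<notin> I" for k
  proof -
    have "k \<noteq> n + 1 + 2 * j" for j
      using that unfolding I_def by (cases "j < N") auto
    then show ?thesis unfolding F_def by (simp add: legendre_sine_moment_eq_0)
  qed
  have "(\<Sum>k<N. F k) = (\<Sum>k\<in>{..<N} \<inter> I. F k)"
    by (rule sum.mono_neutral_right) (use F_eq_0 in auto)
  also have "\<dots> \<le> (\<Sum>k\<in>I. F k)"
    by (rule sum_mono2) (auto simp: I_def F_nonneg)
  also have "\<dots> = (\<Sum>j<N. F (n + 1 + 2 * j))"
    unfolding I_def by (subst sum.reindex) (auto simp: inj_on_def)
  also have "\<dots> \<le> (\<Sum>j<N. wallis n * s^(n + 1) * (inv_sqrt_coeff j * (s^2)^j))"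
  proof (rule sum_mono)
    fix j
    have "F (n + 1 + 2 * j) = s^(n + 1) * (s^2)^j * inv_sqrt_coeff j * wallis (n + j)"
    proof -
      have "s^(n + 1 + 2 * j) = s^(n + 1) * (s^2)^j" by (simp add: power_add power_mult)
      then show ?thesis unfolding F_def legendre_sine_moment_eq by (simp only: mult_ac)
    qed
    also have "\<dots> \<le> s^(n + 1) * (s^2)^j * inv_sqrt_coeff j * wallis n"
      using wallis_antimono[of n "n + j"] inv_sqrt_coeff_pos[of j] assms by (intro mult_left_mono) auto
    finally show "F (n + 1 + 2 * j) \<le> wallis n * s^(n + 1) * (inv_sqrt_coeff j * (s^2)^j)"
      by (simp add: mult_ac)
  qed
  also have "\<dots> = wallis n * s^(n + 1) * (\<Sum>j<N. inv_sqrt_coeff j * (s^2)^j)"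
    by (simp add: sum_distrib_left)
  also have "\<dots> \<le> wallis n * s^(n + 1) * (1 - s^2) powr (-1/2)"
  proof (rule mult_left_mono)
    have "s^2 < 1" using assms by (simp add: power_less_one_iff abs_square_less_1)
    then show "(\<Sum>j<N. inv_sqrt_coeff j * (s^2)^j) \<le> (1 - s^2) powr (-1/2)"
      by (intro sum_inv_sqrt_coeff_le) auto
  qed (use wallis_pos[of n] assms in auto)
  finally show ?thesis unfolding F_def .
qed

section \<open>The Legendre kernel on Joukowski images\<close>

definition joukowski :: "complex \<Rightarrow> complex" where
  "joukowski t = (1 / t + t) / 2"

(* legendre_kernel n z = 2 Q_n(z), by Neumann's integral Q_n(z) = 1/2 int_{-1}^1 P_n(x) / (z - x) dx
   for the Legendre function of the second kind after substituting x = cos phi *)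
definition legendre_kernel :: "nat \<Rightarrow> complex \<Rightarrow> complex" where
  "legendre_kernel n z =
     integral {0..pi} (\<lambda>\<phi>. of_real (legendreP n (cos \<phi>)) * (of_real (sin \<phi>) / (z - of_real (cos \<phi>))))"

lemma joukowski_sub_cos_factor:
  assumes "t \<noteq> 0"
  shows "(1 - t * cis \<phi>) * (1 - t * cis (-\<phi>)) = 2 * t * (joukowski t - of_real (cos \<phi>))"
proof -
  have "(1 - t * cis \<phi>) * (1 - t * cis (-\<phi>)) = 1 - t * (cis \<phi> + cis (-\<phi>)) + t^2 * (cis \<phi> * cis (-\<phi>))"
    by (simp add: algebra_simps power2_eq_square)
  also have "\<dots> = 1 - 2 * t * of_real (cos \<phi>) + t^2"
    by (simp add: complex_eq_iff cis_mult)
  also have "\<dots> = 2 * t * (joukowski t - of_real (cos \<phi>))"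
    using assms by (simp add: joukowski_def field_simps power2_eq_square)
  finally show ?thesis .
qed

lemma one_minus_mult_cis_nonzero:
  assumes "norm t < 1"
  shows "1 - t * cis \<phi> \<noteq> 0"
proof
  assume "1 - t * cis \<phi> = 0"
  then have "t * cis \<phi> = 1" by simp
  then have "norm (t * cis \<phi>) = 1" by simp
  with assms show False by (simp add: norm_mult)
qed

lemma joukowski_ne_cos:
  assumes "t \<noteq> 0" "norm t < 1"
  shows "joukowski t \<noteq> of_real (cos \<phi>)"
  using joukowski_sub_cos_factor[OF assms(1), of \<phi>] one_minus_mult_cis_nonzero[OF assms(2)] by force

lemma sin_div_joukowski_sub_cos_expansion:
  assumes "t \<noteq> 0" "norm t < 1"
  shows "of_real (sin \<phi>) / (joukowski t - of_real (cos \<phi>))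
     = (\<Sum>k<N. 2 * t^k * of_real (sin (real k * \<phi>)))
       + ((t * cis \<phi>)^N / (1 - t * cis \<phi>) - (t * cis (-\<phi>))^N / (1 - t * cis (-\<phi>))) / \<i>"
proof -
  define a where "a = t * cis \<phi>"
  define b where "b = t * cis (-\<phi>)"
  have a: "1 - a \<noteq> 0" and b: "1 - b \<noteq> 0"
    unfolding a_def b_def using one_minus_mult_cis_nonzero[OF assms(2)] by blast+
  have "a - b = \<i> * (2 * t * of_real (sin \<phi>))"
    unfolding a_def b_def by (simp add: complex_eq_iff)
  then have "1 / (1 - a) - 1 / (1 - b) = \<i> * (2 * t * of_real (sin \<phi>)) / ((1 - a) * (1 - b))"
    using a b by (simp add: field_simps)
  also have "\<dots> = \<i> * (of_real (sin \<phi>) / (joukowski t - of_real (cos \<phi>)))"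
    unfolding a_def b_def joukowski_sub_cos_factor[OF assms(1)] using assms(1) by simp
  finally have lhs: "of_real (sin \<phi>) / (joukowski t - of_real (cos \<phi>)) = (1 / (1 - a) - 1 / (1 - b)) / \<i>"
    by simp
  have geometric: "1 / (1 - c) = (\<Sum>k<N. c^k) + c^N / (1 - c)" if "1 - c \<noteq> 0" for c :: complex
    using that by (simp add: sum_gp_strict field_simps)
  have powers: "a^k - b^k = \<i> * (2 * t^k * of_real (sin (real k * \<phi>)))" for k
    unfolding a_def b_def power_mult_distrib Complex.DeMoivre by (simp add: complex_eq_iff)
  have "((\<Sum>k<N. a^k) - (\<Sum>k<N. b^k)) / \<i> = (\<Sum>k<N. (a^k - b^k) / \<i>)"
    by (simp only: sum_divide_distrib[symmetric] sum_subtractf)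
  also have "\<dots> = (\<Sum>k<N. 2 * t^k * of_real (sin (real k * \<phi>)))"
    unfolding powers by simp
  finally show ?thesis
    unfolding lhs geometric[OF a] geometric[OF b] a_def[symmetric] b_def[symmetric]
    by (simp add: algebra_simps)
qed

lemma norm_power_div_one_minus_le:
  fixes c :: "'a :: real_normed_field"
  assumes "norm c < 1"
  shows "norm (c^N / (1 - c)) \<le> norm c ^ N / (1 - norm c)"
proof -
  have "1 - norm c \<le> norm (1 - c)"
    using norm_triangle_ineq2[of 1 c] by simp
  then show ?thesis
    using assms by (simp add: norm_divide norm_power frac_le)
qed

lemma norm_sin_div_joukowski_sub_cos_sum_le:
  assumes "t \<noteq> 0" "norm t < 1"
  shows "norm (of_real (sin \<phi>) / (joukowski t - of_real (cos \<phi>)) - (\<Sum>k<N. 2 * t^k * of_real (sin (real k * \<phi>))))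
         \<le> 2 * norm t ^ N / (1 - norm t)"
proof -
  have tail: "norm ((t * cis \<psi>)^N / (1 - t * cis \<psi>)) \<le> norm t ^ N / (1 - norm t)" for \<psi>
    using norm_power_div_one_minus_le[of "t * cis \<psi>" N] assms by (simp add: norm_mult)
  have "norm (of_real (sin \<phi>) / (joukowski t - of_real (cos \<phi>)) - (\<Sum>k<N. 2 * t^k * of_real (sin (real k * \<phi>))))
      = norm ((t * cis \<phi>)^N / (1 - t * cis \<phi>) - (t * cis (-\<phi>))^N / (1 - t * cis (-\<phi>)))"
    unfolding sin_div_joukowski_sub_cos_expansion[OF assms, of \<phi> N] by (simp add: norm_divide norm_mult)
  also have "\<dots> \<le> norm t ^ N / (1 - norm t) + norm t ^ N / (1 - norm t)"
    by (rule order_trans[OF norm_triangle_ineq4 add_mono[OF tail tail]])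
  finally show ?thesis by simp
qed

lemma norm_legendre_kernel_sub_partial_sum_le:
  assumes "t \<noteq> 0" "norm t < 1" and B: "\<And>\<phi>. \<phi> \<in> {0..pi} \<Longrightarrow> \<bar>legendreP n (cos \<phi>)\<bar> \<le> B"
  shows "norm (legendre_kernel n (joukowski t) - (\<Sum>k<N. 2 * t^k * of_real (legendre_sine_moment n k)))
    \<le> B * (2 * norm t ^ N / (1 - norm t)) * pi"
proof -
  define S where "S \<phi> = (\<Sum>k<N. 2 * t^k * of_real (sin (real k * \<phi>)))" for \<phi>
  define R where "R \<phi> = of_real (legendreP n (cos \<phi>)) * (of_real (sin \<phi>) / (joukowski t - of_real (cos \<phi>)) - S \<phi>)" for \<phi>
  have "((\<lambda>\<phi>. of_real (legendreP n (cos \<phi>)) * (of_real (sin \<phi>) / (joukowski t - of_real (cos \<phi>))))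
      has_integral legendre_kernel n (joukowski t)) {0..pi}"
    unfolding legendre_kernel_def using joukowski_ne_cos[OF assms(1,2)]
    by (intro integrable_integral integrable_continuous_real continuous_intros) auto
  moreover have "((\<lambda>\<phi>. \<Sum>k<N. 2 * t^k * of_real (legendreP n (cos \<phi>) * sin (real k * \<phi>)))
      has_integral (\<Sum>k<N. 2 * t^k * of_real (legendre_sine_moment n k))) {0..pi}"
    by (intro has_integral_sum has_integral_mult_right has_integral_of_real has_integral_legendreP_cos_sin) auto
  ultimately have "((\<lambda>\<phi>. of_real (legendreP n (cos \<phi>)) * (of_real (sin \<phi>) / (joukowski t - of_real (cos \<phi>)))
      - (\<Sum>k<N. 2 * t^k * of_real (legendreP n (cos \<phi>) * sin (real k * \<phi>))))
      has_integral legendre_kernel n (joukowski t) - (\<Sum>k<N. 2 * t^k * of_real (legendre_sine_moment n k))) {0..pi}"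
    by (rule has_integral_diff)
  then have "(R has_integral legendre_kernel n (joukowski t) - (\<Sum>k<N. 2 * t^k * of_real (legendre_sine_moment n k))) {0..pi}"
  proof (rule has_integral_eq[rotated])
    fix \<phi>
    have "(\<Sum>k<N. 2 * t^k * of_real (legendreP n (cos \<phi>) * sin (real k * \<phi>))) = of_real (legendreP n (cos \<phi>)) * S \<phi>"
      unfolding S_def by (simp add: sum_distrib_left mult_ac)
    then show "of_real (legendreP n (cos \<phi>)) * (of_real (sin \<phi>) / (joukowski t - of_real (cos \<phi>)))
      - (\<Sum>k<N. 2 * t^k * of_real (legendreP n (cos \<phi>) * sin (real k * \<phi>))) = R \<phi>"
      unfolding R_def right_diff_distrib by (simp only:)
  qed
  moreover have "norm (R \<phi>) \<le> B * (2 * norm t ^ N / (1 - norm t))" if "\<phi> \<in> {0..pi}" for \<phi>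
    unfolding R_def S_def norm_mult norm_of_real
    using B[OF that] norm_sin_div_joukowski_sub_cos_sum_le[OF assms(1,2), of \<phi> N] by (intro mult_mono) auto
  moreover have "0 \<le> B * (2 * norm t ^ N / (1 - norm t))"
    using B[of 0] assms(2) by simp
  ultimately have "norm (legendre_kernel n (joukowski t) - (\<Sum>k<N. 2 * t^k * of_real (legendre_sine_moment n k)))
      \<le> B * (2 * norm t ^ N / (1 - norm t)) * Henstock_Kurzweil_Integration.content {0..pi}"
    by (intro has_integral_bound_real[where S = "{}"]) auto
  then show ?thesis by simp
qed

lemma legendre_kernel_partial_sums:
  assumes "t \<noteq> 0" "norm t < 1"
  shows "(\<lambda>N. \<Sum>k<N. 2 * t^k * of_real (legendre_sine_moment n k)) \<longlonglongrightarrow> legendre_kernel n (joukowski t)"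
proof -
  have "compact ((\<lambda>\<phi>. legendreP n (cos \<phi>)) ` {0..pi})"
    by (intro compact_continuous_image continuous_intros compact_Icc)
  then obtain B where B: "\<And>\<phi>. \<phi> \<in> {0..pi} \<Longrightarrow> \<bar>legendreP n (cos \<phi>)\<bar> \<le> B"
    using compact_imp_bounded bounded_pos by (metis image_eqI real_norm_def)
  have "(\<lambda>N. B * (2 * norm t ^ N / (1 - norm t)) * pi) \<longlonglongrightarrow> B * (2 * 0 / (1 - norm t)) * pi"
    using assms by (intro tendsto_intros LIMSEQ_power_zero) auto
  then have "(\<lambda>N. B * (2 * norm t ^ N / (1 - norm t)) * pi) \<longlonglongrightarrow> 0"
    by simp
  then have "(\<lambda>N. (\<Sum>k<N. 2 * t^k * of_real (legendre_sine_moment n k)) - legendre_kernel n (joukowski t)) \<longlonglongrightarrow> 0"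
    by (rule Lim_null_comparison[rotated])
       (use norm_legendre_kernel_sub_partial_sum_le[OF assms B] in \<open>simp add: norm_minus_commute\<close>)
  then show ?thesis
    by (rule Lim_transform[OF tendsto_const])
qed

lemma norm_legendre_kernel_joukowski_le:
  assumes "t \<noteq> 0" "norm t < 1"
  shows "norm (legendre_kernel n (joukowski t)) \<le> 2 * wallis n * norm t ^ (n + 1) * (1 - norm t ^ 2) powr (-1/2)"
proof -
  have "norm (\<Sum>k<N. 2 * t^k * of_real (legendre_sine_moment n k))
      \<le> 2 * wallis n * norm t ^ (n + 1) * (1 - norm t ^ 2) powr (-1/2)" for N
  proof -
    have "norm (\<Sum>k<N. 2 * t^k * of_real (legendre_sine_moment n k))
        \<le> (\<Sum>k<N. norm (2 * t^k * of_real (legendre_sine_moment n k)))"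
      by (rule norm_sum)
    also have "\<dots> = 2 * (\<Sum>k<N. norm t ^ k * legendre_sine_moment n k)"
      by (simp add: sum_distrib_left norm_mult norm_power legendre_sine_moment_nonneg mult_ac)
    also have "\<dots> \<le> 2 * (wallis n * norm t ^ (n + 1) * (1 - (norm t)^2) powr (-1/2))"
      using sum_legendre_sine_moment_le[where s = "norm t" and N = N and n = n] assms by simp
    finally show ?thesis by (simp add: mult_ac)
  qed
  then show ?thesis
    by (intro LIMSEQ_le_const2[OF tendsto_norm[OF legendre_kernel_partial_sums[OF assms]]]) blast
qed

section \<open>The Bernstein ellipse as a contour\<close>

definition bernstein_path :: "real \<Rightarrow> real \<Rightarrow> complex" where
  "bernstein_path r \<tau> =
     (of_real r * exp (\<i> * of_real (2*pi*\<tau>)) + of_real (1/r) * exp (- \<i> * of_real (2*pi*\<tau>))) / 2"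

definition bernstein_path_deriv :: "real \<Rightarrow> real \<Rightarrow> complex" where
  "bernstein_path_deriv r \<tau> =
     \<i> * of_real pi * (of_real r * exp (\<i> * of_real (2*pi*\<tau>)) - of_real (1/r) * exp (- \<i> * of_real (2*pi*\<tau>)))"

lemma has_vector_derivative_bernstein_path:
  "(bernstein_path r has_vector_derivative bernstein_path_deriv r \<tau>) (at \<tau> within X)"
proof -
  have "((\<lambda>x. (of_real r * exp (\<i> * (2 * of_real pi * x)) + of_real (1/r) * exp (- \<i> * (2 * of_real pi * x))) / 2)
      has_field_derivative bernstein_path_deriv r \<tau>) (at (of_real \<tau>))"
    unfolding bernstein_path_deriv_def
    by (rule derivative_eq_intros refl | simp)+ (simp add: algebra_simps)
  from has_vector_derivative_real_field[OF this] show ?thesis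
    unfolding bernstein_path_def by (simp add: has_vector_derivative_at_within mult_ac)
qed

lemma continuous_on_bernstein_path [continuous_intros]:
  assumes "continuous_on S g"
  shows "continuous_on S (\<lambda>x. bernstein_path r (g x))"
proof -
  have "continuous_on UNIV (\<lambda>\<tau>. (a * exp (\<i> * of_real (2*pi*\<tau>)) + b * exp (- \<i> * of_real (2*pi*\<tau>))) / 2)" for a b
    by (intro continuous_intros) auto
  then show ?thesis
    unfolding bernstein_path_def by (rule continuous_on_compose2[OF _ assms]) simp
qed

lemma continuous_on_bernstein_path_deriv [continuous_intros]:
  assumes "continuous_on S g"
  shows "continuous_on S (\<lambda>x. bernstein_path_deriv r (g x))"
proof -
  have "continuous_on UNIV (\<lambda>\<tau>. c * (a * exp (\<i> * of_real (2*pi*\<tau>)) - b * exp (- \<i> * of_real (2*pi*\<tau>))))" for a b c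
    by (intro continuous_intros)
  then show ?thesis
    unfolding bernstein_path_deriv_def by (rule continuous_on_compose2[OF _ assms]) simp
qed

lemma bernstein_path_in_ellipse: "\<tau> \<in> {0..1} \<Longrightarrow> bernstein_path r \<tau> \<in> bernstein_ellipse r"
  unfolding bernstein_ellipse_def bernstein_path_def by (rule image_eqI[where x = "2*pi*\<tau>"]) auto

lemma Re_bernstein_path: "Re (bernstein_path r \<tau>) = (r + 1/r) / 2 * cos (2*pi*\<tau>)"
  unfolding bernstein_path_def by (simp add: Re_exp Im_exp field_simps)

lemma Im_bernstein_path: "Im (bernstein_path r \<tau>) = (r - 1/r) / 2 * sin (2*pi*\<tau>)"
  unfolding bernstein_path_def by (simp add: Re_exp Im_exp field_simps)

lemma bernstein_path_1: "bernstein_path 1 \<tau> = of_real (cos (2*pi*\<tau>))"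
  by (simp add: complex_eq_iff Re_bernstein_path Im_bernstein_path)

lemma bernstein_path_joukowski:
  assumes "r > 0"
  obtains t where "norm t = 1 / r" "bernstein_path r \<tau> = joukowski t"
proof
  define t where "t = of_real (1/r) * exp (- \<i> * of_real (2*pi*\<tau>))"
  have "norm (exp (- \<i> * of_real (2*pi*\<tau>))) = 1"
    using norm_exp_i_times[of "- (2*pi*\<tau>)"] by simp
  then show "norm t = 1 / r"
    unfolding t_def norm_mult using assms by (simp add: norm_divide)
  have "1 / t = of_real r * exp (\<i> * of_real (2*pi*\<tau>))"
    unfolding t_def using assms by (simp add: exp_minus field_simps)
  then show "bernstein_path r \<tau> = joukowski t"
    unfolding bernstein_path_def joukowski_def t_def by simp
qed

lemma pathfinish_bernstein_path: "pathfinish (bernstein_path r) = pathstart (bernstein_path r)"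
proof -
  have "exp (\<i> * of_real (2*pi)) = 1" by (simp add: exp_eq_1)
  moreover from this have "exp (- \<i> * of_real (2*pi)) = 1"
    by (simp add: exp_minus)
  ultimately show ?thesis
    unfolding pathfinish_def pathstart_def bernstein_path_def by simp
qed

lemma valid_path_bernstein_path: "valid_path (bernstein_path r)"
proof -
  have "vector_derivative (bernstein_path r) (at \<tau>) = bernstein_path_deriv r \<tau>" for \<tau>
    using has_vector_derivative_bernstein_path by (rule vector_derivative_at)
  then have "bernstein_path r C1_differentiable_on {0..1}"
    unfolding C1_differentiable_on_eq
    using has_vector_derivative_bernstein_path[of r _ UNIV] continuous_on_bernstein_path_deriv[OF continuous_on_id]
    by (auto simp: vector_derivative_works[symmetric] differentiable_def has_vector_derivative_def)
  then show ?thesis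
    unfolding valid_path_def by (rule C1_differentiable_imp_piecewise)
qed

lemma path_image_bernstein_path: "path_image (bernstein_path r) \<subseteq> bernstein_ellipse r"
  unfolding path_image_def using bernstein_path_in_ellipse by auto

lemma bernstein_ellipse_subset_region: "1 \<le> r \<Longrightarrow> r \<le> \<rho> \<Longrightarrow> bernstein_ellipse r \<subseteq> bernstein_region \<rho>"
  unfolding bernstein_region_def by auto

lemma of_real_in_bernstein_region:
  assumes "\<bar>x\<bar> \<le> 1" "1 \<le> \<rho>"
  shows "(of_real x :: complex) \<in> bernstein_region \<rho>"
proof -
  have "0 \<le> arccos x" "arccos x \<le> pi"
    using assms by (auto intro: arccos_lbound arccos_ubound)
  then have "bernstein_path 1 (arccos x / (2*pi)) \<in> bernstein_ellipse 1"
    using pi_gt_zero by (intro bernstein_path_in_ellipse) (auto simp: field_simps)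
  moreover have "bernstein_path 1 (arccos x / (2*pi)) = of_real x"
    unfolding bernstein_path_1 using assms by (simp add: cos_arccos_abs)
  ultimately show ?thesis
    using bernstein_ellipse_subset_region[of 1 \<rho>] assms by auto
qed

lemma closed_segment_subset_bernstein_region:
  assumes "1 \<le> \<rho>"
  shows "closed_segment (-1::complex) 1 \<subseteq> bernstein_region \<rho>"
proof
  fix z :: complex
  assume "z \<in> closed_segment (-1) 1"
  then obtain u where u: "0 \<le> u" "u \<le> 1" "z = (1 - u) *\<^sub>R (-1) + u *\<^sub>R 1"
    unfolding closed_segment_def by blast
  then have "z = of_real (2 * u - 1)" by (simp add: complex_eq_iff scaleR_conv_of_real)
  then show "z \<in> bernstein_region \<rho>"
    using u assms of_real_in_bernstein_region[of "2 * u - 1" \<rho>] by simp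
qed

lemma path_image_bernstein_path_1: "path_image (bernstein_path 1) \<subseteq> closed_segment (-1) 1"
proof
  fix z
  assume "z \<in> path_image (bernstein_path 1)"
  then obtain c where c: "z = of_real c" "\<bar>c\<bar> \<le> 1"
    unfolding path_image_def bernstein_path_1 by auto
  have "of_real c = (1 - (c + 1) / 2) *\<^sub>R (-1::complex) + ((c + 1) / 2) *\<^sub>R 1"
    by (simp add: complex_eq_iff scaleR_conv_of_real field_simps)
  then show "z \<in> closed_segment (-1) 1"
    unfolding closed_segment_def c(1) using c(2) by (intro CollectI exI[of _ "(c + 1) / 2"]) auto
qed

lemma winding_number_bernstein_path_outside:
  assumes "\<rho> > 1" "w \<notin> bernstein_region \<rho>"
  shows "winding_number (bernstein_path \<rho>) w = 0"
proof -
  define h where "h = (\<lambda>(s, \<tau>). bernstein_path (\<rho> - s * (\<rho> - 1)) \<tau>)"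
  have radius: "1 \<le> \<rho> - s * (\<rho> - 1)" "\<rho> - s * (\<rho> - 1) \<le> \<rho>" if "s \<in> {0..1}" for s
  proof -
    have "s * (\<rho> - 1) \<le> \<rho> - 1" "0 \<le> s * (\<rho> - 1)"
      using that assms mult_right_mono[of s 1 "\<rho> - 1"] by auto
    then show "1 \<le> \<rho> - s * (\<rho> - 1)" "\<rho> - s * (\<rho> - 1) \<le> \<rho>" by linarith+
  qed
  have "homotopic_loops (-{w}) (bernstein_path \<rho>) (bernstein_path 1)"
    unfolding homotopic_loops
  proof (intro exI conjI ballI)
    show "continuous_on ({0..1} \<times> {0..1}) h"
      unfolding h_def bernstein_path_def case_prod_unfold
      by (intro continuous_intros) (use radius in force)+
    show "h \<in> {0..1} \<times> {0..1} \<rightarrow> - {w}"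
    proof
      fix p :: "real \<times> real"
      assume p: "p \<in> {0..1} \<times> {0..1}"
      then have "h p \<in> bernstein_ellipse (\<rho> - fst p * (\<rho> - 1))"
        unfolding h_def by (auto intro: bernstein_path_in_ellipse simp: case_prod_unfold)
      also have "\<dots> \<subseteq> bernstein_region \<rho>"
        using radius[of "fst p"] p by (intro bernstein_ellipse_subset_region) auto
      finally show "h p \<in> - {w}" using assms(2) by auto
    qed
    show "h (0, x) = bernstein_path \<rho> x" "h (1, x) = bernstein_path 1 x" for x
      unfolding h_def by simp_all
    show "pathfinish (h \<circ> Pair s) = pathstart (h \<circ> Pair s)" for s
      using pathfinish_bernstein_path unfolding h_def pathfinish_def pathstart_def by simp
  qed
  then have "winding_number (bernstein_path \<rho>) w = winding_number (bernstein_path 1) w"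
    by (rule winding_number_homotopic_loops)
  also have "\<dots> = 0"
  proof (rule winding_number_zero_outside[OF _ convex_closed_segment _ _ path_image_bernstein_path_1])
    show "path (bernstein_path 1)"
      by (rule valid_path_imp_path[OF valid_path_bernstein_path])
    show "w \<notin> closed_segment (-1) 1"
      using closed_segment_subset_bernstein_region[of \<rho>] assms by auto
  qed (rule pathfinish_bernstein_path)
  finally show ?thesis .
qed

lemma of_real_notin_closed_segment_bernstein_path_circlepath:
  assumes "\<rho> > 1" "\<bar>x\<bar> \<le> 1"
  shows "of_real x \<notin> closed_segment (bernstein_path \<rho> \<tau>) (circlepath 0 \<rho> \<tau>)"
proof
  define a where "a = (\<rho> + 1/\<rho>) / 2"
  define b where "b = (\<rho> - 1/\<rho>) / 2"
  assume "of_real x \<in> closed_segment (bernstein_path \<rho> \<tau>) (circlepath 0 \<rho> \<tau>)"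
  then obtain u where u: "0 \<le> u" "u \<le> 1" "of_real x = (1 - u) *\<^sub>R bernstein_path \<rho> \<tau> + u *\<^sub>R circlepath 0 \<rho> \<tau>"
    unfolding closed_segment_def by blast
  \<comment> \<open>the segment point lies on the ellipse with semi-axes \<open>A > 1\<close> and \<open>B > 0\<close>, which misses \<open>[-1, 1]\<close>\<close>
  define A where "A = (1 - u) * a + u * \<rho>"
  define B where "B = (1 - u) * b + u * \<rho>"
  have "1/\<rho> < 1" using assms by simp
  moreover have "\<rho> + 1/\<rho> - 2 = (\<rho> - 1)^2 / \<rho>"
    using assms by (simp add: field_simps power2_eq_square)
  moreover have "(\<rho> - 1)^2 / \<rho> > 0" using assms by simp
  ultimately have "2 < \<rho> + 1/\<rho>" "1/\<rho> < \<rho>" using assms by linarith+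
  then have ab: "a > 1" "b > 0"
    unfolding a_def b_def by auto
  have convex_pos: "(1 - u) * p + u * q > 0" if "p > 0" "q > 0" for p q
  proof (cases "u = 0")
    case False
    then have "u * q > 0" "(1 - u) * p \<ge> 0" using u that by auto
    then show ?thesis by linarith
  qed (use that in simp)
  have "A - 1 = (1 - u) * (a - 1) + u * (\<rho> - 1)"
    unfolding A_def by (simp add: algebra_simps)
  then have AB: "A > 1" "B > 0"
    using convex_pos[of "a - 1" "\<rho> - 1"] convex_pos[of b \<rho>] ab assms unfolding B_def by auto
  have "Re (circlepath 0 \<rho> \<tau>) = \<rho> * cos (2*pi*\<tau>)" "Im (circlepath 0 \<rho> \<tau>) = \<rho> * sin (2*pi*\<tau>)"
    unfolding circlepath by (simp_all add: Re_exp Im_exp mult_ac)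
  moreover have "x = (1 - u) * Re (bernstein_path \<rho> \<tau>) + u * Re (circlepath 0 \<rho> \<tau>)"
    "0 = (1 - u) * Im (bernstein_path \<rho> \<tau>) + u * Im (circlepath 0 \<rho> \<tau>)"
    using arg_cong[OF u(3), of Re] arg_cong[OF u(3), of Im] by simp_all
  ultimately have x: "x = A * cos (2*pi*\<tau>)" and "0 = B * sin (2*pi*\<tau>)"
    unfolding A_def B_def a_def b_def Re_bernstein_path Im_bernstein_path by (simp_all add: algebra_simps)
  then have "sin (2*pi*\<tau>) = 0" using AB(2) by simp
  then have "\<bar>cos (2*pi*\<tau>)\<bar> = 1"
    using sin_cos_squared_add[of "2*pi*\<tau>"] by (simp add: abs_square_eq_1)
  then have "\<bar>x\<bar> = A"
    unfolding x using AB(1) by (simp add: abs_mult)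
  then show False using AB(1) assms(2) by simp
qed

lemma winding_number_bernstein_path_inside:
  assumes "\<rho> > 1" "\<bar>x\<bar> \<le> 1"
  shows "winding_number (bernstein_path \<rho>) (of_real x) = 1"
proof -
  have "homotopic_loops (-{of_real x}) (bernstein_path \<rho>) (circlepath 0 \<rho>)"
  proof (rule homotopic_loops_linear)
    show "path (bernstein_path \<rho>)"
      by (rule valid_path_imp_path[OF valid_path_bernstein_path])
    show "pathfinish (bernstein_path \<rho>) = pathstart (bernstein_path \<rho>)"
      by (rule pathfinish_bernstein_path)
    show "closed_segment (bernstein_path \<rho> \<tau>) (circlepath 0 \<rho> \<tau>) \<subseteq> - {of_real x}" for \<tau>
      using of_real_notin_closed_segment_bernstein_path_circlepath[OF assms] by blast
  qed simp_all
  then have "winding_number (bernstein_path \<rho>) (of_real x) = winding_number (circlepath 0 \<rho>) (of_real x)"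
    by (rule winding_number_homotopic_loops)
  also have "\<dots> = 1"
    using assms by (intro winding_number_circlepath) auto
  finally show ?thesis .
qed

lemma bernstein_path_ne_cos:
  assumes "\<rho> > 1"
  shows "bernstein_path \<rho> \<tau> \<noteq> of_real (cos \<phi>)"
proof -
  obtain t where t: "norm t = 1 / \<rho>" "bernstein_path \<rho> \<tau> = joukowski t"
    using bernstein_path_joukowski assms by (metis zero_less_one less_trans)
  then have "t \<noteq> 0" "norm t < 1" using assms by auto
  then show ?thesis using joukowski_ne_cos[of t \<phi>] t(2) by simp
qed

lemma has_integral_bernstein_path_Cauchy:
  assumes "\<rho> > 1" "open U" "bernstein_region \<rho> \<subseteq> U" "f holomorphic_on U"
  shows "((\<lambda>\<tau>. f (bernstein_path \<rho> \<tau>) / (bernstein_path \<rho> \<tau> - of_real (cos \<phi>)) * bernstein_path_deriv \<rho> \<tau>)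
          has_integral (2 * pi * \<i> * f (of_real (cos \<phi>)))) {0..1}"
proof -
  have "of_real (cos \<phi>) \<in> U"
    using of_real_in_bernstein_region[of "cos \<phi>" \<rho>] assms by auto
  moreover have "path_image (bernstein_path \<rho>) \<subseteq> U - {of_real (cos \<phi>)}"
    using path_image_bernstein_path[of \<rho>] bernstein_ellipse_subset_region[of \<rho> \<rho>] assms bernstein_path_ne_cos
    by (auto simp: path_image_def)
  moreover have "winding_number (bernstein_path \<rho>) w = 0" if "w \<notin> U" for w
    using that assms by (intro winding_number_bernstein_path_outside) auto
  ultimately have "((\<lambda>w. f w / (w - of_real (cos \<phi>))) has_contour_integral
      (2 * pi * \<i> * winding_number (bernstein_path \<rho>) (of_real (cos \<phi>)) * f (of_real (cos \<phi>)))) (bernstein_path \<rho>)"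
    using assms by (intro Cauchy_integral_formula_global valid_path_bernstein_path pathfinish_bernstein_path) auto
  then have "((\<lambda>w. f w / (w - of_real (cos \<phi>))) has_contour_integral (2 * pi * \<i> * f (of_real (cos \<phi>)))) (bernstein_path \<rho>)"
    using winding_number_bernstein_path_inside[of \<rho> "cos \<phi>"] assms by simp
  moreover have "vector_derivative (bernstein_path \<rho>) (at \<tau> within {0..1}) = bernstein_path_deriv \<rho> \<tau>"
    if "\<tau> \<in> {0..1}" for \<tau>
    by (rule vector_derivative_within_closed_interval) (use that has_vector_derivative_bernstein_path in auto)
  ultimately show ?thesis
    unfolding has_contour_integral_def by (auto elim!: has_integral_eq[rotated])
qed

lemma norm_bernstein_path_deriv_le:
  assumes "r \<ge> 1"
  shows "norm (bernstein_path_deriv r \<tau>)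
    \<le> 2 * pi * ((r + 1/r) / 2 * \<bar>sin (2*pi*\<tau>)\<bar> + (r - 1/r) / 2 * (1 - \<bar>sin (2*pi*\<tau>)\<bar>))"
proof -
  define a where "a = (r + 1/r) / 2"
  define b where "b = (r - 1/r) / 2"
  define \<sigma> where "\<sigma> = \<bar>sin (2*pi*\<tau>)\<bar>"
  have "1/r \<le> 1" using assms by simp
  then have "1/r \<le> r" using assms by linarith
  then have ab: "0 \<le> b" "b \<le> a" unfolding a_def b_def using assms by auto
  have \<sigma>: "0 \<le> \<sigma>" "\<sigma> \<le> 1" unfolding \<sigma>_def by auto
  have "Re (bernstein_path_deriv r \<tau>) = - (2 * pi * (a * sin (2*pi*\<tau>)))"
    "Im (bernstein_path_deriv r \<tau>) = 2 * pi * (b * cos (2*pi*\<tau>))"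
    unfolding bernstein_path_deriv_def a_def b_def by (simp_all add: Re_exp Im_exp field_simps)
  then have "norm (bernstein_path_deriv r \<tau>) = sqrt ((2*pi)^2 * (a^2 * \<sigma>^2 + b^2 * (1 - \<sigma>^2)))"
    unfolding cmod_def \<sigma>_def by (simp add: power_mult_distrib cos_squared_eq algebra_simps)
  also have "\<dots> \<le> sqrt ((2*pi)^2 * (a * \<sigma> + b * (1 - \<sigma>))^2)"
  proof -
    have "(a * \<sigma> + b * (1 - \<sigma>))^2 - (a^2 * \<sigma>^2 + b^2 * (1 - \<sigma>^2)) = 2 * b * \<sigma> * (1 - \<sigma>) * (a - b)"
      by (simp add: algebra_simps power2_eq_square)
    moreover have "0 \<le> 2 * b * \<sigma> * (1 - \<sigma>) * (a - b)"
      using ab \<sigma> by simp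
    ultimately have "a^2 * \<sigma>^2 + b^2 * (1 - \<sigma>^2) \<le> (a * \<sigma> + b * (1 - \<sigma>))^2"
      by linarith
    then show ?thesis by (intro real_sqrt_le_mono mult_left_mono) auto
  qed
  also have "\<dots> = 2 * pi * (a * \<sigma> + b * (1 - \<sigma>))"
    using ab \<sigma> by (simp add: real_sqrt_mult)
  finally show ?thesis unfolding a_def b_def \<sigma>_def .
qed

lemma has_integral_abs_sin_2pi: "((\<lambda>\<tau>. \<bar>sin (2*pi*\<tau>)\<bar>) has_integral 2 / pi) {0..1}"
proof -
  have "((\<lambda>\<tau>. sin (2*pi*\<tau>)) has_integral (- cos (2*pi*(1/2)) / (2*pi) - - cos (2*pi*0) / (2*pi))) {0..1/2}"
    by (rule fundamental_theorem_of_calculus)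
       (auto intro!: derivative_eq_intros simp: has_real_derivative_iff_has_vector_derivative[symmetric])
  then have "((\<lambda>\<tau>. sin (2*pi*\<tau>)) has_integral 1 / pi) {0..1/2}"
    by simp
  then have first_half: "((\<lambda>\<tau>. \<bar>sin (2*pi*\<tau>)\<bar>) has_integral 1 / pi) {0..1/2}"
  proof (rule has_integral_eq[rotated])
    fix \<tau> :: real
    assume "\<tau> \<in> {0..1/2}"
    then have "sin (2*pi*\<tau>) \<ge> 0" by (intro sin_ge_zero) auto
    then show "sin (2*pi*\<tau>) = \<bar>sin (2*pi*\<tau>)\<bar>" by simp
  qed
  have "((\<lambda>\<tau>. - sin (2*pi*\<tau>)) has_integral (cos (2*pi*1) / (2*pi) - cos (2*pi*(1/2)) / (2*pi))) {1/2..1}"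
    by (rule fundamental_theorem_of_calculus)
       (auto intro!: derivative_eq_intros simp: has_real_derivative_iff_has_vector_derivative[symmetric])
  then have "((\<lambda>\<tau>. - sin (2*pi*\<tau>)) has_integral 1 / pi) {1/2..1}"
    by simp
  then have second_half: "((\<lambda>\<tau>. \<bar>sin (2*pi*\<tau>)\<bar>) has_integral 1 / pi) {1/2..1}"
  proof (rule has_integral_eq[rotated])
    fix \<tau> :: real
    assume "\<tau> \<in> {1/2..1}"
    then have "sin (2*pi*\<tau>) \<le> 0"
      by (cases "\<tau> = 1") (auto intro!: sin_le_zero)
    then show "- sin (2*pi*\<tau>) = \<bar>sin (2*pi*\<tau>)\<bar>" by simp
  qed
  from has_integral_combine[OF _ _ first_half second_half] show ?thesis by simp
qed

lemma has_integral_bernstein_speed_bound: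
  "((\<lambda>\<tau>. 2 * pi * (a * \<bar>sin (2*pi*\<tau>)\<bar> + b * (1 - \<bar>sin (2*pi*\<tau>)\<bar>))) has_integral (4 * a + (2 * pi - 4) * b)) {0..1}"
proof -
  have "((\<lambda>\<tau>. 2 * pi * (a * \<bar>sin (2*pi*\<tau>)\<bar> + b * (1 - \<bar>sin (2*pi*\<tau>)\<bar>))) has_integral (2 * pi * (a * (2 / pi) + b * (1 - 2 / pi)))) {0..1}"
    using has_integral_const_real[of "1::real" 0 1]
    by (intro has_integral_mult_right has_integral_add has_integral_diff has_integral_abs_sin_2pi) auto
  moreover have "2 * pi * (a * (2 / pi) + b * (1 - 2 / pi)) = 4 * a + (2 * pi - 4) * b"
    by (simp add: field_simps)
  ultimately show ?thesis by simp
qed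

lemma Gamma_plus_half_le:
  fixes x :: real
  assumes "x > 0"
  shows "Gamma (x + 1/2) \<le> sqrt x * Gamma x"
proof -
  have Gamma_pos: "Gamma x > 0" "Gamma (x + 1/2) > 0" "Gamma (x + 1) > 0"
    using assms by (intro Gamma_real_pos; simp)+
  have "(ln \<circ> Gamma) ((1 - 1/2) *\<^sub>R x + (1/2) *\<^sub>R (x + 1)) \<le> (1 - 1/2) * (ln \<circ> Gamma) x + (1/2) * (ln \<circ> Gamma) (x + 1)"
    using assms by (intro convex_onD[OF log_convex_Gamma_real]) auto
  moreover have "(1 - 1/2) *\<^sub>R x + (1/2) *\<^sub>R (x + 1) = x + 1/2"
    by (simp add: field_simps)
  ultimately have "2 * ln (Gamma (x + 1/2)) \<le> ln (Gamma x) + ln (Gamma (x + 1))"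
    by simp
  then have "exp (2 * ln (Gamma (x + 1/2))) \<le> exp (ln (Gamma x) + ln (Gamma (x + 1)))"
    by simp
  then have "Gamma (x + 1/2)^2 \<le> Gamma x * Gamma (x + 1)"
    using Gamma_pos by (simp add: exp_double exp_add)
  also have "\<dots> = (sqrt x * Gamma x)^2"
  proof -
    have "Gamma (x + 1) = x * Gamma x"
      using assms by (intro Gamma_plus1) (auto dest: nonpos_Ints_nonpos)
    then show ?thesis using assms by (simp add: power_mult_distrib power2_eq_square)
  qed
  finally have "Gamma (x + 1/2)^2 \<le> (sqrt x * Gamma x)^2" .
  then show ?thesis
    by (rule power2_le_imp_le) (use assms Gamma_pos in auto)
qed

lemma wallis_eq_Gamma: "(real n + 1/2) * wallis n = sqrt pi * Gamma (real n + 1) / Gamma (real n + 1/2)"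
proof (induction n)
  case 0
  then show ?case by (simp add: Gamma_one_half_real)
next
  case (Suc n)
  have Gamma_Suc: "Gamma (x + 1) = x * Gamma x" if "x > 0" for x :: real
    using that by (intro Gamma_plus1) (auto dest: nonpos_Ints_nonpos)
  have Gamma_Suc_n: "Gamma (real (Suc n) + 1) = (real n + 1) * Gamma (real n + 1)"
    "Gamma (real (Suc n) + 1/2) = (real n + 1/2) * Gamma (real n + 1/2)"
    using Gamma_Suc[of "real n + 1"] Gamma_Suc[of "real n + 1/2"] by (simp_all add: algebra_simps)
  have "Gamma (real n + 1/2) > 0" by (intro Gamma_real_pos) simp
  have "(real (Suc n) + 1/2) * wallis (Suc n) = (real n + 1) * wallis n"
    by (simp add: divide_simps) (simp add: algebra_simps)
  also have "\<dots> = (real n + 1) / (real n + 1/2) * ((real n + 1/2) * wallis n)"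
    by (simp add: divide_simps)
  also have "\<dots> = sqrt pi * Gamma (real (Suc n) + 1) / Gamma (real (Suc n) + 1/2)"
    unfolding Suc Gamma_Suc_n using \<open>Gamma (real n + 1/2) > 0\<close> by (simp add: divide_simps)
  finally show ?case .
qed

lemma sqrt_add_half_le: "x > 0 \<Longrightarrow> sqrt (x + 1/2) \<le> sqrt x * exp (1 / (4 * x))"
proof -
  assume x: "x > 0"
  have "x + 1/2 = x * (1 + 1 / (2 * x))" using x by (simp add: field_simps)
  also have "\<dots> \<le> x * exp (1 / (2 * x))"
    using x by (intro mult_left_mono exp_ge_add_one_self) auto
  also have "\<dots> = (sqrt x * exp (1 / (4 * x)))^2"
    using x by (simp add: power_mult_distrib exp_double[symmetric])
  finally show ?thesis using x by (intro real_le_lsqrt) auto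
qed

lemma exp_quarter_le_Upsilon:
  assumes "n \<ge> 1"
  shows "exp (1 / (4 * real n)) \<le> Upsilon n 1 (1/2)"
proof -
  have "1 / (4 * real n) \<le> 1 / (4 * real n - 2)"
    using assms by (intro divide_left_mono) auto
  moreover have "0 \<le> 1 / (12 * real n)" by simp
  moreover have "(1 - 1/2) / (2 * (real n + 1/2 - 1)) + 1 / (12 * (real n + 1 - 1)) + (1 - 1) * (1 - 1/2) / real n
      = 1 / (4 * real n - 2) + 1 / (12 * real n)"
    by (simp add: algebra_simps)
  ultimately have "1 / (4 * real n) \<le> (1 - 1/2) / (2 * (real n + 1/2 - 1)) + 1 / (12 * (real n + 1 - 1))
      + (1 - 1) * (1 - 1/2) / real n"
    by linarith
  then show ?thesis
    unfolding Upsilon_def by simp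
qed

lemma wallis_le_Upsilon:
  assumes "n \<ge> 1"
  shows "(real n + 1/2) * wallis n \<le> Gamma (1/2) * sqrt (real n) * Upsilon n 1 (1/2)"
proof -
  have "Gamma (real n + 1/2) > 0" by (intro Gamma_real_pos) simp
  moreover have "Gamma (real n + 1) \<le> sqrt (real n + 1/2) * Gamma (real n + 1/2)"
    using Gamma_plus_half_le[of "real n + 1/2"] by (simp add: add.assoc)
  ultimately have "(real n + 1/2) * wallis n \<le> sqrt pi * sqrt (real n + 1/2)"
    unfolding wallis_eq_Gamma by (simp add: divide_simps mult_left_mono)
  also have "\<dots> \<le> sqrt pi * (sqrt (real n) * Upsilon n 1 (1/2))"
  proof (rule mult_left_mono)
    have "sqrt (real n + 1/2) \<le> sqrt (real n) * exp (1 / (4 * real n))"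
      using sqrt_add_half_le[of "real n"] assms by simp
    also have "\<dots> \<le> sqrt (real n) * Upsilon n 1 (1/2)"
      using exp_quarter_le_Upsilon[OF assms] by (rule mult_left_mono) simp
    finally show "sqrt (real n + 1/2) \<le> sqrt (real n) * Upsilon n 1 (1/2)" .
  qed simp
  finally show ?thesis by (simp add: Gamma_one_half_real mult_ac)
qed

section \<open>The contour representation and the bound\<close>

lemma has_integral_cos_substitution:
  fixes g :: "real \<Rightarrow> 'a::euclidean_space"
  assumes "continuous_on {-1..1} g"
  shows "((\<lambda>\<phi>. sin \<phi> *\<^sub>R g (cos \<phi>)) has_integral integral {-1..1} g) {0..pi}"
proof -
  have "((\<lambda>\<phi>. (- sin \<phi>) *\<^sub>R g (cos \<phi>)) has_integral (integral {cos 0..cos pi} g - integral {cos pi..cos 0} g)) {0..pi}"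
    by (rule has_integral_substitution_general[of "{}" 0 pi cos "-1" 1 g "\<lambda>\<phi>. - sin \<phi>"])
       (auto intro!: continuous_intros derivative_eq_intros assms)
  then have "((\<lambda>\<phi>. - ((- sin \<phi>) *\<^sub>R g (cos \<phi>))) has_integral - (- integral {-1..1} g)) {0..pi}"
    by (intro has_integral_neg) simp
  then show ?thesis by simp
qed

lemma compact_bernstein_ellipse: "compact (bernstein_ellipse \<rho>)"
proof -
  have "continuous_on {0..2*pi} (\<lambda>\<theta>::real. (a * exp (\<i> * of_real \<theta>) + b * exp (- \<i> * of_real \<theta>)) / 2)" for a b
    by (intro continuous_intros) auto
  then show ?thesis
    unfolding bernstein_ellipse_def by (intro compact_continuous_image compact_Icc)
qed

lemma norm_le_SUP_bernstein_ellipse: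
  assumes "continuous_on (bernstein_ellipse \<rho>) f" "z \<in> bernstein_ellipse \<rho>"
  shows "norm (f z) \<le> (SUP w\<in>bernstein_ellipse \<rho>. norm (f w))"
proof (rule cSUP_upper[OF assms(2)])
  have "compact ((\<lambda>w. norm (f w)) ` bernstein_ellipse \<rho>)"
    using assms(1) compact_bernstein_ellipse by (intro compact_continuous_image continuous_intros)
  then show "bdd_above ((\<lambda>w. norm (f w)) ` bernstein_ellipse \<rho>)"
    by (intro bounded_imp_bdd_above compact_imp_bounded)
qed

lemma continuous_on_Cauchy_integrand:
  assumes "\<rho> > 1" "continuous_on (bernstein_ellipse \<rho>) f"
  shows "continuous_on (cbox (0, 0) (pi, 1)) (\<lambda>(\<phi>, \<tau>).
    of_real (legendreP n (cos \<phi>)) * (of_real (sin \<phi>) / (bernstein_path \<rho> \<tau> - of_real (cos \<phi>)))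
      * (f (bernstein_path \<rho> \<tau>) * bernstein_path_deriv \<rho> \<tau>))"
proof -
  have "continuous_on (cbox (0, 0) (pi, 1)) (\<lambda>p::real \<times> real. bernstein_path \<rho> (snd p))"
    by (intro continuous_intros)
  moreover have "(\<lambda>p. bernstein_path \<rho> (snd p)) ` cbox (0, 0) (pi, 1) \<subseteq> bernstein_ellipse \<rho>"
    using bernstein_path_in_ellipse by (auto simp: cbox_Pair_eq)
  ultimately have "continuous_on (cbox (0, 0) (pi, 1)) (\<lambda>p::real \<times> real. f (bernstein_path \<rho> (snd p)))"
    by (rule continuous_on_compose2[OF assms(2)])
  then show ?thesis
    unfolding case_prod_unfold using bernstein_path_ne_cos[OF assms(1)]
    by (intro continuous_intros) auto
qed

lemma integrable_on_integral_fst: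
  fixes H :: "real \<Rightarrow> real \<Rightarrow> 'a::banach"
  assumes "continuous_on (cbox (a, c) (b, d)) (\<lambda>(x, y). H x y)"
  shows "(\<lambda>y. integral {a..b} (\<lambda>x. H x y)) integrable_on {c..d}"
proof -
  have "continuous_on (cbox (c, a) (d, b)) ((\<lambda>(x, y). H x y) \<circ> prod.swap)"
    by (rule continuous_on_compose[OF _ continuous_on_subset[OF assms]])
       (auto simp: case_prod_unfold cbox_Pair_eq intro!: continuous_intros)
  from integral_integrable_2dim[OF this] show ?thesis
    by (simp add: cbox_interval case_prod_unfold)
qed

lemma has_integral_legendre_kernel_bernstein_path:
  assumes "\<rho> > 1" "open U" "bernstein_region \<rho> \<subseteq> U" "f holomorphic_on U"
  shows "((\<lambda>\<tau>. legendre_kernel n (bernstein_path \<rho> \<tau>) * (f (bernstein_path \<rho> \<tau>) * bernstein_path_deriv \<rho> \<tau>))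
          has_integral (2 * pi * \<i> * integral {-1..1} (\<lambda>x. f (of_real x) * of_real (legendreP n x)))) {0..1}"
proof -
  define P where "P \<phi> = (of_real (legendreP n (cos \<phi>)) :: complex)" for \<phi>
  define H where "H \<phi> \<tau> = P \<phi> * (of_real (sin \<phi>) / (bernstein_path \<rho> \<tau> - of_real (cos \<phi>)))
    * (f (bernstein_path \<rho> \<tau>) * bernstein_path_deriv \<rho> \<tau>)" for \<phi> \<tau>
  have f_cont: "continuous_on U f"
    using assms(4) by (rule holomorphic_on_imp_continuous_on)
  have "bernstein_ellipse \<rho> \<subseteq> U"
    using bernstein_ellipse_subset_region[of \<rho> \<rho>] assms by auto
  then have H_cont: "continuous_on (cbox (0, 0) (pi, 1)) (\<lambda>(\<phi>, \<tau>). H \<phi> \<tau>)"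
    unfolding H_def P_def using assms(1) continuous_on_subset[OF f_cont]
    by (intro continuous_on_Cauchy_integrand)
  have H_integral_\<tau>: "integral {0..1} (H \<phi>) = 2 * pi * \<i> * (sin \<phi> *\<^sub>R (f (of_real (cos \<phi>)) * P \<phi>))" for \<phi>
  proof -
    have "(H \<phi> has_integral P \<phi> * of_real (sin \<phi>) * (2 * pi * \<i> * f (of_real (cos \<phi>)))) {0..1}"
      unfolding H_def using has_integral_bernstein_path_Cauchy[OF assms, of \<phi>]
      by (auto dest: has_integral_mult_right[where c = "P \<phi> * of_real (sin \<phi>)"] simp: mult_ac)
    then show ?thesis by (simp add: integral_unique scaleR_conv_of_real mult_ac)
  qed
  have Fubini: "integral {0..1} (\<lambda>\<tau>. integral {0..pi} (\<lambda>\<phi>. H \<phi> \<tau>)) = integral {0..pi} (\<lambda>\<phi>. integral {0..1} (H \<phi>))"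
    using integral_swap_continuous[OF H_cont] unfolding cbox_interval by (rule sym)
  have Cauchy: "integral {0..pi} (\<lambda>\<phi>. integral {0..1} (H \<phi>))
      = 2 * pi * \<i> * integral {-1..1} (\<lambda>x. f (of_real x) * of_real (legendreP n x))"
  proof -
    have "of_real x \<in> U" if "x \<in> {-1..1}" for x
      using that of_real_in_bernstein_region[of x \<rho>] assms by auto
    then have "continuous_on {-1..1} (\<lambda>x. f (of_real x) * of_real (legendreP n x))"
      by (intro continuous_intros continuous_on_compose2[OF f_cont]) auto
    from has_integral_mult_right[OF has_integral_cos_substitution[OF this], of "2 * pi * \<i>"] show ?thesis
      unfolding H_integral_\<tau> P_def by (rule integral_unique)
  qed
  have kernel: "integral {0..pi} (\<lambda>\<phi>. H \<phi> \<tau>)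
      = legendre_kernel n (bernstein_path \<rho> \<tau>) * (f (bernstein_path \<rho> \<tau>) * bernstein_path_deriv \<rho> \<tau>)" for \<tau>
    unfolding H_def P_def legendre_kernel_def by (rule integral_mult_left)
  from integrable_integral[OF integrable_on_integral_fst[OF H_cont]]
  have "((\<lambda>\<tau>. integral {0..pi} (\<lambda>\<phi>. H \<phi> \<tau>)) has_integral
      (2 * pi * \<i> * integral {-1..1} (\<lambda>x. f (of_real x) * of_real (legendreP n x)))) {0..1}"
    unfolding Fubini Cauchy .
  then show ?thesis unfolding kernel .
qed

lemma norm_legendre_kernel_bernstein_path_le:
  assumes "\<rho> > 1"
  shows "norm (legendre_kernel n (bernstein_path \<rho> \<tau>)) \<le> 2 * wallis n * (1/\<rho>)^(n + 1) * (1 - (1/\<rho>)^2) powr (-1/2)"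
proof -
  obtain t where t: "norm t = 1 / \<rho>" "bernstein_path \<rho> \<tau> = joukowski t"
    using bernstein_path_joukowski assms by (metis zero_less_one less_trans)
  then have "t \<noteq> 0" "norm t < 1" using assms by auto
  from norm_legendre_kernel_joukowski_le[OF this, of n] show ?thesis
    unfolding t by simp
qed

lemma norm_integral_legendreP_le:
  assumes "\<rho> > 1" "open U" "bernstein_region \<rho> \<subseteq> U" "f holomorphic_on U"
    and f_bound: "\<And>z. z \<in> bernstein_ellipse \<rho> \<Longrightarrow> norm (f z) \<le> M"
  shows "norm (integral {-1..1} (\<lambda>x. f (of_real x) * of_real (legendreP n x)))
    \<le> M * (2 * wallis n * (1/\<rho>)^(n + 1) * (1 - (1/\<rho>)^2) powr (-1/2))
        * (4 * ((\<rho> + 1/\<rho>) / 2) + (2 * pi - 4) * ((\<rho> - 1/\<rho>) / 2)) / (2 * pi)"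
proof -
  define I where "I = integral {-1..1} (\<lambda>x. f (of_real x) * of_real (legendreP n x))"
  define KB where "KB = 2 * wallis n * (1/\<rho>)^(n + 1) * (1 - (1/\<rho>)^2) powr (-1/2)"
  define a where "a = (\<rho> + 1/\<rho>) / 2"
  define b where "b = (\<rho> - 1/\<rho>) / 2"
  define g where "g \<tau> = legendre_kernel n (bernstein_path \<rho> \<tau>) * (f (bernstein_path \<rho> \<tau>) * bernstein_path_deriv \<rho> \<tau>)" for \<tau>
  define h where "h \<tau> = KB * (M * (2 * pi * (a * \<bar>sin (2*pi*\<tau>)\<bar> + b * (1 - \<bar>sin (2*pi*\<tau>)\<bar>))))" for \<tau>
  have g_integral: "(g has_integral 2 * pi * \<i> * I) {0..1}"
    unfolding g_def I_def by (rule has_integral_legendre_kernel_bernstein_path[OF assms(1-4)])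
  have h_integral: "(h has_integral KB * (M * (4 * a + (2 * pi - 4) * b))) {0..1}"
    unfolding h_def by (intro has_integral_mult_right has_integral_bernstein_speed_bound)
  have "M \<ge> 0"
    using f_bound[OF bernstein_path_in_ellipse[of 0 \<rho>]] norm_ge_zero by (meson atLeastAtMost_iff order_trans zero_le_one order_refl)
  moreover have "KB \<ge> 0"
    unfolding KB_def using wallis_pos[of n] assms by (simp add: less_imp_le)
  moreover have "norm (legendre_kernel n (bernstein_path \<rho> \<tau>)) \<le> KB" for \<tau>
    unfolding KB_def by (rule norm_legendre_kernel_bernstein_path_le[OF assms(1)])
  moreover have "norm (bernstein_path_deriv \<rho> \<tau>) \<le> 2 * pi * (a * \<bar>sin (2*pi*\<tau>)\<bar> + b * (1 - \<bar>sin (2*pi*\<tau>)\<bar>))" for \<tau>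
    unfolding a_def b_def using assms(1) by (intro norm_bernstein_path_deriv_le) simp
  ultimately have "norm (g \<tau>) \<le> h \<tau>" if "\<tau> \<in> {0..1}" for \<tau>
    unfolding g_def h_def norm_mult
    using f_bound[OF bernstein_path_in_ellipse[OF that]] by (intro mult_mono) auto
  then have "norm (integral {0..1} g) \<le> integral {0..1} h"
    using g_integral h_integral by (intro integral_norm_bound_integral) auto
  then have "2 * pi * norm I \<le> KB * (M * (4 * a + (2 * pi - 4) * b))"
    unfolding integral_unique[OF g_integral] integral_unique[OF h_integral] by (simp add: norm_mult)
  then show ?thesis
    unfolding I_def[symmetric] KB_def[symmetric] a_def[symmetric] b_def[symmetric] by (simp add: field_simps)
qed

lemma wallis_bound_le_Lambda_half:
  assumes "\<rho> > 1" "M \<ge> 0" "n \<ge> 1"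
  shows "(real n + 1/2) * (M * (2 * wallis n * (1/\<rho>)^(n + 1) * (1 - (1/\<rho>)^2) powr (-1/2))
            * (4 * ((\<rho> + 1/\<rho>) / 2) + (2 * pi - 4) * ((\<rho> - 1/\<rho>) / 2)) / (2 * pi))
         \<le> Lambda_half n \<rho> M / sqrt (\<rho>^2 - 1) * sqrt (real n) / \<rho>^n"
proof -
  define Q where "Q = 2 * (\<rho> + 1/\<rho>) + 2 * (pi/2 - 1) * (\<rho> - 1/\<rho>)"
  define W where "W = M * Q / (pi * (\<rho>^n * sqrt (\<rho>^2 - 1)))"
  have "1/\<rho> < 1" using assms by simp
  then have "1/\<rho> \<le> \<rho>" using assms by linarith
  then have "Q \<ge> 0"
    unfolding Q_def using assms pi_gt3 by (intro add_nonneg_nonneg mult_nonneg_nonneg) auto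
  have "\<rho>^2 > 1" using assms by (simp add: one_less_power)
  then have sqrt_pos: "sqrt (\<rho>^2 - 1) > 0" by simp
  have powr_eq: "(1 - (1/\<rho>)^2) powr (-1/2) = \<rho> / sqrt (\<rho>^2 - 1)"
  proof -
    have "1 - (1/\<rho>)^2 = (\<rho>^2 - 1) / \<rho>^2" using assms by (simp add: field_simps)
    moreover have "(\<rho>^2 - 1) / \<rho>^2 > 0" using \<open>\<rho>^2 > 1\<close> by (intro divide_pos_pos) auto
    ultimately show ?thesis
      using assms by (simp add: powr_minus_divide powr_half_sqrt real_sqrt_divide)
  qed
  have "W \<ge> 0" unfolding W_def using assms \<open>Q \<ge> 0\<close> sqrt_pos by simp
  have "(real n + 1/2) * (M * (2 * wallis n * (1/\<rho>)^(n + 1) * (1 - (1/\<rho>)^2) powr (-1/2))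
            * (4 * ((\<rho> + 1/\<rho>) / 2) + (2 * pi - 4) * ((\<rho> - 1/\<rho>) / 2)) / (2 * pi))
      = ((real n + 1/2) * wallis n) * W"
  proof -
    have "4 * ((\<rho> + 1/\<rho>) / 2) + (2 * pi - 4) * ((\<rho> - 1/\<rho>) / 2) = Q"
      unfolding Q_def by (simp add: field_simps)
    moreover have "2 * wallis n * (1/\<rho>)^(n + 1) * (\<rho> / sqrt (\<rho>^2 - 1)) = 2 * wallis n * (1 / (\<rho>^n * sqrt (\<rho>^2 - 1)))"
      using assms by (simp add: power_one_over)
    moreover have "c * (M * (2 * w * (1 / D)) * Q / (2 * pi)) = (c * w) * (M * Q / (pi * D))" if "D > 0" for c w D
      using that by (simp add: divide_simps)
    ultimately show ?thesis
      unfolding powr_eq W_def using assms sqrt_pos by (simp add: ac_simps)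
  qed
  also have "\<dots> \<le> (Gamma (1/2) * sqrt (real n) * Upsilon n 1 (1/2)) * W"
    by (rule mult_right_mono[OF wallis_le_Upsilon[OF assms(3)] \<open>W \<ge> 0\<close>])
  also have "\<dots> = Lambda_half n \<rho> M / sqrt (\<rho>^2 - 1) * sqrt (real n) / \<rho>^n"
    unfolding Lambda_half_def W_def Q_def using assms sqrt_pos by (simp add: field_simps)
  finally show ?thesis .
qed

theorem corollary4p4:
  fixes f :: "complex \<Rightarrow> complex" and \<rho> :: real and n :: nat
  assumes "\<rho> > 1"
    and "f analytic_on bernstein_region \<rho>"
    and "M = (SUP z\<in>bernstein_ellipse \<rho>. cmod (f z))"
    and "n \<ge> 1"
  shows "cmod (legendre_coeff f n) \<le> Lambda_half n \<rho> M / sqrt (\<rho>^2 - 1) * sqrt (real n) / \<rho>^n"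
proof -
  obtain U where U: "open U" "bernstein_region \<rho> \<subseteq> U" "f holomorphic_on U"
    using assms(2) analytic_on_holomorphic by blast
  have "bernstein_ellipse \<rho> \<subseteq> U"
    using bernstein_ellipse_subset_region[of \<rho> \<rho>] U(2) assms(1) by auto
  then have "continuous_on (bernstein_ellipse \<rho>) f"
    by (rule continuous_on_subset[OF holomorphic_on_imp_continuous_on[OF U(3)]])
  then have f_bound: "cmod (f z) \<le> M" if "z \<in> bernstein_ellipse \<rho>" for z
    unfolding assms(3) using that by (rule norm_le_SUP_bernstein_ellipse)
  have "M \<ge> 0"
    using f_bound[OF bernstein_path_in_ellipse[of 0]] by (auto intro: order_trans[OF norm_ge_zero])
  have "cmod (legendre_coeff f n) = (real n + 1/2) * norm (integral {-1..1} (\<lambda>x. f (of_real x) * of_real (legendreP n x)))"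
    unfolding legendre_coeff_def norm_mult norm_of_real by simp
  also have "\<dots> \<le> (real n + 1/2) * (M * (2 * wallis n * (1/\<rho>)^(n + 1) * (1 - (1/\<rho>)^2) powr (-1/2))
            * (4 * ((\<rho> + 1/\<rho>) / 2) + (2 * pi - 4) * ((\<rho> - 1/\<rho>) / 2)) / (2 * pi))"
    using norm_integral_legendreP_le[OF assms(1) U f_bound] by (rule mult_left_mono) auto
  also have "\<dots> \<le> Lambda_half n \<rho> M / sqrt (\<rho>^2 - 1) * sqrt (real n) / \<rho>^n"
    by (rule wallis_bound_le_Lambda_half[OF assms(1) \<open>M \<ge> 0\<close> assms(4)])
  finally show ?thesis .
qed

end
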